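(* Let $(x_n)$ be a nonincreasing interval-filling sequence of positive reals with cardinal function $f$, and suppose there are indices $k<m$ such that $x_m<r_m$ and $x_k+x_m<r_k$. Then there exists $y\in\mathcal{A}((x_n))$ with $f(y)\ge4$ (with $\omega,\mathfrak{c}$ counting as $\ge4$).
   Context: For a summable sequence $\mathbf{x}=(x_n)$ of positive reals, $\mathcal{A}(\mathbf{x})=\{\sum_{n\in A}x_n: A\subseteq\mathbb{N}\}$ is its achievement set and its cardinal function $f$ assigns to $x\in\mathcal{A}(\mathbf{x})$ the cardinality (a positive integer, $\omega$, or $\mathfrak{c}$) of $\{(\varepsilon_n)\in\{0,1\}^{\mathbb{N}}:\sum\varepsilon_nx_n=x\}$. The sequence is interval-filling if $\mathcal{A}(\mathbf{x})$ is an interval. The tail sums are $r_n=\sum_{k=n+1}^\infty x_k$. *)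

theory Defs
  imports "HOL-Analysis.Analysis"
begin

text \<open>Subset sum of a sequence over an index set A (a 0/1 sequence is identified
  with the set of indices where it equals 1).\<close>
definition subset_sum :: "(nat \<Rightarrow> real) \<Rightarrow> nat set \<Rightarrow> real" where
  "subset_sum x A = (\<Sum>n. if n \<in> A then x n else 0)"

definition achievement_set :: "(nat \<Rightarrow> real) \<Rightarrow> real set" where
  "achievement_set x = {subset_sum x A | A. True}"

text \<open>The set whose cardinality is the cardinal function value f(y).\<close>
definition representations :: "(nat \<Rightarrow> real) \<Rightarrow> real \<Rightarrow> nat set set" where
  "representations x y = {A. subset_sum x A = y}"

definition interval_filling :: "(nat \<Rightarrow> real) \<Rightarrow> bool" where
  "interval_filling x \<longleftrightarrow> is_interval (achievement_set x)"

definition tail_sum :: "(nat \<Rightarrow> real) \<Rightarrow> nat \<Rightarrow> real" where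
  "tail_sum x n = (\<Sum>k. x (n + 1 + k))"

end

theory Submission imports Defs begin

text \<open>For a nonincreasing sequence, interval filling forces Kakeya's condition
  \<open>x\<^sub>i \<le> r\<^sub>i\<close>, and under that condition the greedy algorithm writes every
  \<open>t \<in> [0, r\<^sub>n]\<close> as a sum of terms with indices \<open>> n\<close>. Choose \<open>j > m\<close> with \<open>x\<^sub>j\<close> so
  small that \<open>x\<^sub>m + x\<^sub>j \<le> r\<^sub>m\<close> and \<open>x\<^sub>k + x\<^sub>m + x\<^sub>j \<le> r\<^sub>k\<close>. Then
  \<open>y = x\<^sub>k + x\<^sub>m + x\<^sub>j\<close> is represented by \<open>{k, m, j}\<close>, by \<open>{k, m}\<close> together with an
  expansion of \<open>x\<^sub>j\<close> beyond \<open>j\<close>, by \<open>{k}\<close> together with an expansion of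
  \<open>x\<^sub>m + x\<^sub>j\<close> beyond \<open>m\<close>, and by an expansion of \<open>y\<close> beyond \<open>k\<close>; these four sets
  are told apart by their membership of \<open>j\<close>, \<open>m\<close> and \<open>k\<close>.\<close>

lemma summable_restrict:
  assumes "\<And>n. 0 \<le> x n" "summable x"
  shows "summable (\<lambda>n. if n \<in> A then x n else (0::real))"
  by (rule summable_comparison_test[OF _ assms(2)]) (auto simp: assms(1))

lemma subset_sum_finite:
  assumes "finite A"
  shows "subset_sum x A = sum x A"
  unfolding subset_sum_def by (subst suminf_finite[OF assms]) auto

lemma subset_sum_mono:
  assumes "\<And>n. 0 \<le> x n" "summable x" "A \<subseteq> B"
  shows "subset_sum x A \<le> subset_sum x B"
  unfolding subset_sum_def
  by (rule suminf_le) (use assms in \<open>auto intro: summable_restrict\<close>)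

lemma subset_sum_nonneg:
  assumes "\<And>n. 0 \<le> x n" "summable x"
  shows "0 \<le> subset_sum x A"
  using subset_sum_mono[OF assms, of "{}" A] by (simp add: subset_sum_finite)

lemma subset_sum_ge_member:
  assumes "\<And>n. 0 \<le> x n" "summable x" "i \<in> A"
  shows "x i \<le> subset_sum x A"
  using subset_sum_mono[OF assms(1,2), of "{i}" A] assms(3) by (simp add: subset_sum_finite)

lemma subset_sum_Un_disjoint:
  assumes "\<And>n. 0 \<le> x n" "summable x" "A \<inter> B = {}"
  shows "subset_sum x (A \<union> B) = subset_sum x A + subset_sum x B"
proof -
  have "(\<lambda>n. if n \<in> A \<union> B then x n else 0)
      = (\<lambda>n. (if n \<in> A then x n else 0) + (if n \<in> B then x n else 0))"
    using assms(3) by (auto simp: fun_eq_iff)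
  then show ?thesis
    unfolding subset_sum_def
    using suminf_add[OF summable_restrict[OF assms(1,2)] summable_restrict[OF assms(1,2)]]
    by simp
qed

lemma achievement_set_iff_representations:
  "y \<in> achievement_set x \<longleftrightarrow> representations x y \<noteq> {}"
  by (auto simp: achievement_set_def representations_def)

lemma tail_sum_eq_subset_sum:
  assumes "\<And>n. 0 \<le> x n" "summable x"
  shows "tail_sum x n = subset_sum x {n<..}"
proof -
  let ?g = "\<lambda>p. if p \<in> {n<..} then x p else 0"
  have "subset_sum x {n<..} = (\<Sum>p. ?g (p + Suc n)) + (\<Sum>p<Suc n. ?g p)"
    unfolding subset_sum_def by (rule suminf_split_initial_segment[OF summable_restrict[OF assms]])
  also have "(\<Sum>p<Suc n. ?g p) = 0"
    by (intro sum.neutral) auto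
  finally show ?thesis
    by (simp add: tail_sum_def add.commute)
qed

lemma subset_sum_le_tail_sum:
  assumes "\<And>n. 0 \<le> x n" "summable x" "A \<subseteq> {n<..}"
  shows "subset_sum x A \<le> tail_sum x n"
  using subset_sum_mono[OF assms] tail_sum_eq_subset_sum[OF assms(1,2)] by simp

lemma tail_sum_Suc:
  assumes "summable x"
  shows "tail_sum x n = x (Suc n) + tail_sum x (Suc n)"
proof -
  have "summable (\<lambda>k. x (Suc n + k))"
    using summable_ignore_initial_segment[OF assms, of "Suc n"] by (simp add: add.commute)
  from suminf_split_head[OF this] show ?thesis
    unfolding tail_sum_def by simp
qed

lemma tail_sum_tendsto_zero:
  assumes "summable x"
  shows "tail_sum x \<longlonglongrightarrow> 0"
proof -
  have "tail_sum x n = suminf x - (\<Sum>i<Suc n. x i)" for n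
    using suminf_split_initial_segment[OF assms, of "Suc n"]
    unfolding tail_sum_def by (simp add: add.commute)
  then have "tail_sum x = (\<lambda>n. suminf x - (\<Sum>i<Suc n. x i))" ..
  moreover have "(\<lambda>n. suminf x - (\<Sum>i<Suc n. x i)) \<longlonglongrightarrow> suminf x - suminf x"
    by (intro tendsto_diff tendsto_const LIMSEQ_Suc summable_LIMSEQ assms)
  ultimately show ?thesis
    by simp
qed

text \<open>If \<open>r\<^sub>i < x\<^sub>i\<close>, the midpoint of \<open>(r\<^sub>i, x\<^sub>i)\<close> lies between \<open>0\<close> and \<open>\<Sum>x\<close> but is
  no subset sum: a set containing an index \<open>\<le> i\<close> sums to at least \<open>x\<^sub>i\<close>, any other
  set to at most \<open>r\<^sub>i\<close>.\<close>

lemma decseq_interval_filling_le_tail_sum: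
  assumes nonneg: "\<And>n. 0 \<le> x n" and summ: "summable x" and noninc: "decseq x"
    and fill: "interval_filling x"
  shows "x i \<le> tail_sum x i"
proof (rule ccontr)
  assume "\<not> x i \<le> tail_sum x i"
  then have gap: "tail_sum x i < x i" by simp
  define v where "v = (tail_sum x i + x i) / 2"
  have "0 \<in> achievement_set x" "subset_sum x UNIV \<in> achievement_set x"
    using subset_sum_finite[of "{}" x] by (auto simp: achievement_set_def)
  moreover have "0 \<le> v" "v \<le> subset_sum x UNIV"
    using gap subset_sum_ge_member[OF nonneg summ, of i UNIV]
      tail_sum_eq_subset_sum[OF nonneg summ, of i] subset_sum_nonneg[OF nonneg summ, of "{i<..}"]
    by (auto simp: v_def)
  ultimately have "v \<in> achievement_set x"
    using fill unfolding interval_filling_def by (blast intro: mem_is_interval_1_I)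
  then obtain B where B: "subset_sum x B = v"
    by (auto simp: achievement_set_def)
  show False
  proof (cases "B \<subseteq> {i<..}")
    case True
    with subset_sum_le_tail_sum[OF nonneg summ True] B gap show False
      by (simp add: v_def)
  next
    case False
    then obtain p where "p \<in> B" "p \<le> i" by force
    from noninc \<open>p \<le> i\<close> have "x i \<le> x p" by (rule decseqD)
    also have "\<dots> \<le> subset_sum x B" by (rule subset_sum_ge_member[OF nonneg summ \<open>p \<in> B\<close>])
    finally show False using B gap
      by (simp add: v_def)
  qed
qed

primrec greedy_sum :: "(nat \<Rightarrow> real) \<Rightarrow> nat \<Rightarrow> real \<Rightarrow> nat \<Rightarrow> real" where
  "greedy_sum x n t 0 = 0"
| "greedy_sum x n t (Suc i) =
     (if greedy_sum x n t i + x (Suc (n + i)) \<le> t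
      then greedy_sum x n t i + x (Suc (n + i)) else greedy_sum x n t i)"

definition greedy_set :: "(nat \<Rightarrow> real) \<Rightarrow> nat \<Rightarrow> real \<Rightarrow> nat set" where
  "greedy_set x n t = {Suc (n + i) | i. greedy_sum x n t i + x (Suc (n + i)) \<le> t}"

lemma greedy_sum_remainder_bounds:
  assumes summ: "summable x" and kakeya: "\<And>i. n < i \<Longrightarrow> x i \<le> tail_sum x i"
    and t: "0 \<le> t" "t \<le> tail_sum x n"
  shows "0 \<le> t - greedy_sum x n t i \<and> t - greedy_sum x n t i \<le> tail_sum x (n + i)"
proof (induction i)
  case 0
  show ?case using t by simp
next
  case (Suc i)
  have "tail_sum x (n + i) = x (Suc (n + i)) + tail_sum x (Suc (n + i))"
    by (rule tail_sum_Suc[OF summ])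
  moreover have "x (Suc (n + i)) \<le> tail_sum x (Suc (n + i))"
    by (rule kakeya) simp
  ultimately show ?case
    using Suc.IH by (cases "greedy_sum x n t i + x (Suc (n + i)) \<le> t") simp_all
qed

lemma sum_greedy_set:
  "(\<Sum>p<Suc (n + i). if p \<in> greedy_set x n t then x p else 0) = greedy_sum x n t i"
proof (induction i)
  case 0
  have "p \<notin> greedy_set x n t" if "p < Suc n" for p
    using that by (auto simp: greedy_set_def)
  then show ?case by simp
next
  case (Suc i)
  have "Suc (n + i) \<in> greedy_set x n t \<longleftrightarrow> greedy_sum x n t i + x (Suc (n + i)) \<le> t"
    by (auto simp: greedy_set_def)
  moreover have "{..<Suc (n + Suc i)} = insert (Suc (n + i)) {..<Suc (n + i)}"
    by auto
  ultimately show ?case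
    using Suc.IH by simp
qed

lemma subset_sum_greedy_set:
  assumes nonneg: "\<And>n. 0 \<le> x n" and summ: "summable x"
    and kakeya: "\<And>i. n < i \<Longrightarrow> x i \<le> tail_sum x i"
    and t: "0 \<le> t" "t \<le> tail_sum x n"
  shows "subset_sum x (greedy_set x n t) = t"
proof -
  let ?g = "\<lambda>p. if p \<in> greedy_set x n t then x p else 0"
  note bounds = greedy_sum_remainder_bounds[OF summ kakeya t]
  have "(\<lambda>i. t - tail_sum x (i + n)) \<longlonglongrightarrow> t - 0"
    by (intro tendsto_diff tendsto_const LIMSEQ_ignore_initial_segment tail_sum_tendsto_zero summ)
  moreover have "\<forall>i. t - tail_sum x (i + n) \<le> greedy_sum x n t i" "\<forall>i. greedy_sum x n t i \<le> t"
    using bounds by (simp_all add: add.commute algebra_simps)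
  ultimately have "greedy_sum x n t \<longlonglongrightarrow> t"
    using tendsto_sandwich[OF always_eventually always_eventually _ tendsto_const] by simp
  moreover have "(\<lambda>i. \<Sum>p<i + Suc n. ?g p) = greedy_sum x n t"
  proof
    fix i
    have "i + Suc n = Suc (n + i)" by simp
    then show "(\<Sum>p<i + Suc n. ?g p) = greedy_sum x n t i"
      by (simp only: sum_greedy_set)
  qed
  ultimately have "(\<lambda>i. \<Sum>p<i + Suc n. ?g p) \<longlonglongrightarrow> t"
    by (simp only:)
  then have "?g sums t"
    unfolding sums_def by (rule LIMSEQ_offset)
  then show ?thesis
    unfolding subset_sum_def by (rule sums_unique[symmetric])
qed

lemma exists_tail_subset_sum:
  assumes "\<And>n. 0 \<le> x n" "summable x" "\<And>i. n < i \<Longrightarrow> x i \<le> tail_sum x i"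
    and "0 \<le> t" "t \<le> tail_sum x n"
  shows "\<exists>A \<subseteq> {n<..}. subset_sum x A = t"
proof -
  have "greedy_set x n t \<subseteq> {n<..}"
    by (auto simp: greedy_set_def)
  with subset_sum_greedy_set[OF assms] show ?thesis
    by blast
qed

lemma four_representations:
  assumes nonneg: "\<And>n. 0 \<le> x n" and summ: "summable x"
    and kakeya: "\<And>i. k < i \<Longrightarrow> x i \<le> tail_sum x i"
    and "k < m" "m < j"
    and small_m: "x m + x j \<le> tail_sum x m" and small_k: "x k + x m + x j \<le> tail_sum x k"
  obtains F where "F \<subseteq> representations x (x k + x m + x j)" "card F = 4"
proof -
  have expansion: "\<exists>A \<subseteq> {n<..}. subset_sum x A = t"
    if "k \<le> n" "0 \<le> t" "t \<le> tail_sum x n" for n t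
    using exists_tail_subset_sum[OF nonneg summ _ that(2,3)] kakeya that(1) by simp
  obtain U where U: "U \<subseteq> {j<..}" "subset_sum x U = x j"
    using expansion[of j "x j"] nonneg kakeya \<open>k < m\<close> \<open>m < j\<close> by auto
  obtain T where T: "T \<subseteq> {m<..}" "subset_sum x T = x m + x j"
    using expansion[of m "x m + x j"] nonneg[of m] nonneg[of j] small_m \<open>k < m\<close> by auto
  obtain V where V: "V \<subseteq> {k<..}" "subset_sum x V = x k + x m + x j"
    using expansion[of k "x k + x m + x j"] nonneg[of k] nonneg[of m] nonneg[of j] small_k by auto
  let ?F = "{{k, m, j}, {k, m} \<union> U, {k} \<union> T, V}"
  have "subset_sum x {k, m, j} = x k + x m + x j"
    using \<open>k < m\<close> \<open>m < j\<close> by (simp add: subset_sum_finite)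
  moreover have "subset_sum x ({k, m} \<union> U) = x k + x m + x j"
  proof -
    have "{k, m} \<inter> U = {}" using U(1) \<open>k < m\<close> \<open>m < j\<close> by auto
    from subset_sum_Un_disjoint[OF nonneg summ this] show ?thesis
      using U(2) \<open>k < m\<close> by (simp add: subset_sum_finite)
  qed
  moreover have "subset_sum x ({k} \<union> T) = x k + x m + x j"
  proof -
    have "{k} \<inter> T = {}" using T(1) \<open>k < m\<close> by auto
    from subset_sum_Un_disjoint[OF nonneg summ this] show ?thesis
      using T(2) by (simp add: subset_sum_finite)
  qed
  ultimately have "?F \<subseteq> representations x (x k + x m + x j)"
    using V by (auto simp: representations_def)
  moreover have "card ?F = 4"
  proof -
    have "j \<notin> {k, m} \<union> U" "m \<notin> {k} \<union> T" "k \<notin> V"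
      using U T V \<open>k < m\<close> \<open>m < j\<close> by auto
    then have "{k, m, j} \<noteq> {k, m} \<union> U" "{k, m, j} \<noteq> {k} \<union> T" "{k, m, j} \<noteq> V"
      "{k, m} \<union> U \<noteq> {k} \<union> T" "{k, m} \<union> U \<noteq> V" "{k} \<union> T \<noteq> V"
      by blast+
    then show ?thesis by simp
  qed
  ultimately show ?thesis by (rule that)
qed

theorem theorem4p13:
  fixes x :: "nat \<Rightarrow> real" and k m :: nat
  assumes pos: "\<And>n. x n > 0"
    and summ: "summable x"
    and noninc: "decseq x"
    and fill: "interval_filling x"
    and km: "k < m"
    and h1: "x m < tail_sum x m"
    and h2: "x k + x m < tail_sum x k"
  shows "\<exists>y \<in> achievement_set x.
           infinite (representations x y) \<or> card (representations x y) \<ge> 4"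
proof -
  have nonneg: "\<And>n. 0 \<le> x n" using pos less_imp_le by blast
  have kakeya: "\<And>i. x i \<le> tail_sum x i"
    using decseq_interval_filling_le_tail_sum[OF nonneg summ noninc fill] .
  have "\<forall>\<^sub>F j in sequentially. x j < min (tail_sum x m - x m) (tail_sum x k - x k - x m)"
    by (rule order_tendstoD(2)[OF summable_LIMSEQ_zero[OF summ]]) (use h1 h2 in simp)
  then have "\<forall>\<^sub>F j in sequentially.
      m < j \<and> x m + x j \<le> tail_sum x m \<and> x k + x m + x j \<le> tail_sum x k"
    using eventually_gt_at_top[of m] by eventually_elim auto
  then obtain j where "m < j" "x m + x j \<le> tail_sum x m" "x k + x m + x j \<le> tail_sum x k"
    using eventually_happens'[OF sequentially_bot] by blast
  then obtain F where F: "F \<subseteq> representations x (x k + x m + x j)" "card F = 4"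
    using four_representations[OF nonneg summ kakeya km] by blast
  define y where "y = x k + x m + x j"
  from F have "y \<in> achievement_set x"
    by (auto simp: y_def achievement_set_iff_representations)
  moreover have "infinite (representations x y) \<or> card (representations x y) \<ge> 4"
    using card_mono[OF _ F(1)] F(2) by (auto simp: y_def)
  ultimately show ?thesis by blast
qed

end
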